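(* Let $N\ge 1$ and let $(A_N,H_N,D_N)$ be the fuzzy sphere spectral triple described in the context. Then the module of one-forms $\mathcal{E}=\Omega^1(A_N)$ is a free right $A_N$-module of rank $3$ with basis the central elements $1\otimes\sigma_1,\ 1\otimes\sigma_2,\ 1\otimes\sigma_3$.
   Context: Let $J_1,J_2,J_3$ be a basis of the Lie algebra $su(2)$ with $[J_k,J_l]=\sum_{m=1}^3\epsilon_{klm}J_m$ ($\epsilon$ the totally antisymmetric symbol, $\epsilon_{123}=1$). For $n\ge0$ let $\rho_{n/2}$ be the $(n+1)$-dimensional irreducible unitary representation of $su(2)$ on $\mathbb{C}^{n+1}$ (so each $\rho_{n/2}(J_k)$ is skew-Hermitian). Let $K_N=\oplus_{n=0}^N\mathbb{C}^{n+1}$, $X_k=\oplus_{n=0}^N\rho_{n/2}(J_k)\in B(K_N)$, $A_N=B(K_N)$, $H_N=K_N\otimes_{\mathbb{C}}\mathbb{C}^2$ with $a\in A_N$ acting as $a\otimes 1$. Let $\tau_1,\tau_2,\tau_3$ be the Pauli matrices, $\sigma_k=\sqrt{-1}\,\tau_k$, and $D_N=\sum_{k=1}^3X_k\otimes\sigma_k$; identify $B(H_N)=A_N\otimes_{\mathbb{C}}M_2(\mathbb{C})$. The one-forms of the spectral triple are $\Omega^1(A_N)=\{\sum_ja_j[D_N,b_j]:a_j,b_j\in A_N\}\subseteq A_N\otimes M_2(\mathbb{C})$, an $A_N$-bimodule, with $da=[D_N,a]$. *)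

theory Defs
  imports Complex_Main "Jordan_Normal_Form.Matrix"
begin

text \<open>Fuzzy sphere spectral triple. K_N = direct sum of C^(n+1), n = 0..N,
  realised as C^d with d = (N+1)(N+2)/2; the summand C^(n+1) occupies the
  indices blk_start n .. blk_start n + n.\<close>

definition blk_start :: "nat \<Rightarrow> nat" where
  "blk_start n = n * (n + 1) div 2"

definition KN_dim :: "nat \<Rightarrow> nat" where
  "KN_dim N = blk_start (Suc N)"

definition blk :: "nat \<Rightarrow> nat" where
  "blk i = (LEAST n. i < blk_start (Suc n))"

text \<open>Standard (Hermitian) spin-n/2 matrices in the basis |n/2, m>,
  m = n/2 - a, a = 0..n:  L_+ |m> = sqrt((j-m)(j+m+1)) |m+1>.\<close>

definition spin_plus :: "nat \<Rightarrow> nat \<Rightarrow> nat \<Rightarrow> complex" where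
  "spin_plus n b a = (if b + 1 = a then complex_of_real (sqrt (real (a * (n + 1 - a)))) else 0)"

definition spin_L :: "nat \<Rightarrow> nat \<Rightarrow> nat \<Rightarrow> nat \<Rightarrow> complex" where
  "spin_L k n b a =
     (if k = 1 then (spin_plus n b a + spin_plus n a b) / 2
      else if k = 2 then (spin_plus n b a - spin_plus n a b) / (2 * \<i>)
      else if k = 3 then (if b = a then of_real (real n / 2 - real a) else 0)
      else 0)"

text \<open>rho_{n/2}(J_k) = -i L_k : skew-Hermitian, [rho(J_k),rho(J_l)] = eps_klm rho(J_m).\<close>
definition rho :: "nat \<Rightarrow> nat \<Rightarrow> nat \<Rightarrow> nat \<Rightarrow> complex" where
  "rho k n b a = - \<i> * spin_L k n b a"

definition Xop :: "nat \<Rightarrow> nat \<Rightarrow> complex mat" where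
  "Xop N k = mat (KN_dim N) (KN_dim N)
     (\<lambda>(i, j). if blk i = blk j then rho k (blk i) (i - blk_start (blk i)) (j - blk_start (blk j)) else 0)"

definition pauli :: "nat \<Rightarrow> complex mat" where
  "pauli k = mat 2 2 (\<lambda>(i, j).
     if k = 1 then (if i \<noteq> j then 1 else 0)
     else if k = 2 then (if i = 0 \<and> j = 1 then - \<i> else if i = 1 \<and> j = 0 then \<i> else 0)
     else if k = 3 then (if i = j then (if i = 0 then 1 else -1) else 0)
     else 0)"

definition sigma :: "nat \<Rightarrow> complex mat" where
  "sigma k = \<i> \<cdot>\<^sub>m pauli k"

text \<open>Tensor product a \<otimes> s (s a 2x2 matrix), identifying K_N \<otimes> C^2 with C^(2d)
  via the index (i, alpha) \<mapsto> 2 i + alpha.\<close>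
definition tens :: "complex mat \<Rightarrow> complex mat \<Rightarrow> complex mat" where
  "tens a s = mat (2 * dim_row a) (2 * dim_col a)
     (\<lambda>(i, j). a $$ (i div 2, j div 2) * s $$ (i mod 2, j mod 2))"

definition Dirac :: "nat \<Rightarrow> complex mat" where
  "Dirac N = tens (Xop N 1) (sigma 1) + tens (Xop N 2) (sigma 2) + tens (Xop N 3) (sigma 3)"

definition rep :: "complex mat \<Rightarrow> complex mat" where
  "rep a = tens a (1\<^sub>m 2)"

definition dd :: "nat \<Rightarrow> complex mat \<Rightarrow> complex mat" where
  "dd N b = Dirac N * rep b - rep b * Dirac N"

inductive_set Omega1 :: "nat \<Rightarrow> complex mat set" for N :: nat where
  zero: "0\<^sub>m (2 * KN_dim N) (2 * KN_dim N) \<in> Omega1 N"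
| step: "a \<in> carrier_mat (KN_dim N) (KN_dim N) \<Longrightarrow> b \<in> carrier_mat (KN_dim N) (KN_dim N)
          \<Longrightarrow> w \<in> Omega1 N \<Longrightarrow> rep a * dd N b + w \<in> Omega1 N"

definition ebasis :: "nat \<Rightarrow> nat \<Rightarrow> complex mat" where
  "ebasis N k = tens (1\<^sub>m (KN_dim N)) (sigma k)"

end

theory Submission
  imports Defs
begin

text \<open>An operator \<open>\<Sum>\<^sub>k c\<^sub>k \<otimes> \<sigma>\<^sub>k\<close> on \<open>H\<^sub>N\<close> determines its coefficient triple \<open>(c\<^sub>1, c\<^sub>2, c\<^sub>3)\<close>,
  because the \<open>\<sigma>\<^sub>k\<close> are linearly independent. The Dirac operator has the triple \<open>(X\<^sub>1, X\<^sub>2, X\<^sub>3)\<close>,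
  so \<open>[D, b]\<close> has the triple \<open>([X\<^sub>1, b], [X\<^sub>2, b], [X\<^sub>3, b])\<close>, and multiplying by \<open>a \<otimes> 1\<close>
  multiplies each coefficient by \<open>a\<close>; hence every one-form is of this shape. Conversely, by the
  Leibniz rule the triples of one-forms form an \<open>A\<^sub>N\<close>-sub-bimodule of \<open>A\<^sub>N\<^sup>3\<close>. Sandwiching one of
  its elements \<open>c\<close> between matrix units, \<open>\<Sum>\<^sub>m E\<^sub>m\<^sub>p c E\<^sub>q\<^sub>m = c\<^sub>p\<^sub>q \<cdot> 1\<close>, shows that such a
  bimodule contains the scalar triple of each entry of \<open>c\<close>. On the spin-\<open>1/2\<close> block, present since
  \<open>N \<ge> 1\<close>, the commutators of the \<open>X\<^sub>k\<close> with \<open>E\<^sub>1\<^sub>1\<close> and \<open>E\<^sub>1\<^sub>2\<close> give three linearly independent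
  scalar triples, so the bimodule is all of \<open>A\<^sub>N\<^sup>3\<close>.\<close>

lemma sum_lessThan_double:
  fixes f :: "nat \<Rightarrow> 'a::comm_monoid_add"
  shows "(\<Sum>l<2*n. f l) = (\<Sum>m<n. f (2*m) + f (2*m+1))"
  by (induction n) (auto simp: add.assoc add.left_commute)

lemma tens_carrier [simp]: "a \<in> carrier_mat n m \<Longrightarrow> tens a s \<in> carrier_mat (2*n) (2*m)"
  unfolding tens_def by auto

lemma tens_dim [simp]: "dim_row (tens a s) = 2 * dim_row a" "dim_col (tens a s) = 2 * dim_col a"
  unfolding tens_def by auto

lemma tens_index [simp]: "i < 2*dim_row a \<Longrightarrow> j < 2*dim_col a \<Longrightarrow>
   tens a s $$ (i,j) = a $$ (i div 2, j div 2) * s $$ (i mod 2, j mod 2)"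
  unfolding tens_def by auto

lemma tens_mult:
  assumes a: "a \<in> carrier_mat n m" and b: "b \<in> carrier_mat m k"
    and s: "s \<in> carrier_mat 2 2" and t: "t \<in> carrier_mat 2 2"
  shows "tens a s * tens b t = tens (a*b) (s*t)"
proof (rule eq_matI)
  fix i j assume i: "i < dim_row (tens (a*b) (s*t))" and j: "j < dim_col (tens (a*b) (s*t))"
  have blocks: "i div 2 < n" "i mod 2 < 2" "j div 2 < k" "j mod 2 < 2"
    using i j a b by auto
  have "(tens a s * tens b t) $$ (i,j) = (\<Sum>l<2*m. tens a s $$ (i,l) * tens b t $$ (l,j))"
    using i j a b by (simp add: scalar_prod_def atLeast0LessThan sum.reindex)
  also have "\<dots> = (\<Sum>q<m. a $$ (i div 2, q) * s $$ (i mod 2, 0) * (b $$ (q, j div 2) * t $$ (0, j mod 2))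
        + a $$ (i div 2, q) * s $$ (i mod 2, 1) * (b $$ (q, j div 2) * t $$ (1, j mod 2)))"
    unfolding sum_lessThan_double using i j a b by (intro sum.cong refl) auto
  also have "\<dots> = (\<Sum>q<m. a $$ (i div 2, q) * b $$ (q, j div 2)) *
       (s $$ (i mod 2, 0) * t $$ (0, j mod 2) + s $$ (i mod 2, 1) * t $$ (1, j mod 2))"
    by (simp add: sum_distrib_left sum_distrib_right distrib_left distrib_right sum.distrib
        mult.assoc mult.left_commute)
  also have "\<dots> = tens (a*b) (s*t) $$ (i,j)"
    using i j a b s t blocks by (simp add: scalar_prod_def atLeast0LessThan numeral_2_eq_2 lessThan_Suc)
  finally show "(tens a s * tens b t) $$ (i,j) = tens (a*b) (s*t) $$ (i,j)" .
qed (use a b in auto)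

lemma tens_uminus: "tens (-a) s = - tens a s"
  by (rule eq_matI) auto

lemma tens_zero: "tens (0\<^sub>m n m) s = 0\<^sub>m (2*n) (2*m)"
  by (rule eq_matI) auto

lemma sigma_carrier [simp]: "sigma k \<in> carrier_mat 2 2"
  unfolding sigma_def pauli_def by auto

lemma sigma_dim [simp]: "dim_row (sigma k) = 2" "dim_col (sigma k) = 2"
  unfolding sigma_def pauli_def by auto

lemma sigma_entries:
  "sigma 1 $$ (0,0) = 0" "sigma 2 $$ (0,0) = 0" "sigma 3 $$ (0,0) = \<i>"
  "sigma 1 $$ (0,1) = \<i>" "sigma 2 $$ (0,1) = 1" "sigma 3 $$ (0,1) = 0"
  "sigma 1 $$ (1,0) = \<i>" "sigma 2 $$ (1,0) = -1" "sigma 3 $$ (1,0) = 0"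
  unfolding sigma_def pauli_def by auto

lemma rep_carrier [simp]: "a \<in> carrier_mat n n \<Longrightarrow> rep a \<in> carrier_mat (2*n) (2*n)"
  unfolding rep_def by auto

lemma rep_mult: "a \<in> carrier_mat n n \<Longrightarrow> b \<in> carrier_mat n n \<Longrightarrow> rep (a*b) = rep a * rep b"
  unfolding rep_def by (subst tens_mult) auto

lemma rep_uminus: "rep (-a) = - rep a"
  unfolding rep_def by (rule tens_uminus)

lemma rep_one: "rep (1\<^sub>m n) = 1\<^sub>m (2*n)"
proof (rule eq_matI)
  fix i j assume "i < dim_row (1\<^sub>m (2*n) :: complex mat)" "j < dim_col (1\<^sub>m (2*n) :: complex mat)"
  moreover have "(i div 2 = j div 2 \<and> i mod 2 = j mod 2) = (i = j)"
    by (metis div_mult_mod_eq)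
  ultimately show "rep (1\<^sub>m n) $$ (i, j) = (1\<^sub>m (2*n) :: complex mat) $$ (i, j)"
    unfolding rep_def by (auto simp del: One_nat_def)
qed (auto simp: rep_def)

lemma rep_commute_ebasis: "a \<in> carrier_mat (KN_dim N) (KN_dim N) \<Longrightarrow> rep a * ebasis N k = ebasis N k * rep a"
  unfolding ebasis_def rep_def by (simp add: tens_mult[of _ "KN_dim N" "KN_dim N" _ "KN_dim N"])

subsection \<open>Expansion in the Pauli basis\<close>

definition sigma_comb :: "complex mat \<Rightarrow> complex mat \<Rightarrow> complex mat \<Rightarrow> complex mat" where
  "sigma_comb c1 c2 c3 = tens c1 (sigma 1) + tens c2 (sigma 2) + tens c3 (sigma 3)"

lemma sigma_comb_carrier [simp]:
  "c1 \<in> carrier_mat n n \<Longrightarrow> c2 \<in> carrier_mat n n \<Longrightarrow> c3 \<in> carrier_mat n n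
    \<Longrightarrow> sigma_comb c1 c2 c3 \<in> carrier_mat (2*n) (2*n)"
  unfolding sigma_comb_def by auto

lemma sigma_comb_index:
  "c1 \<in> carrier_mat n n \<Longrightarrow> c2 \<in> carrier_mat n n \<Longrightarrow> c3 \<in> carrier_mat n n \<Longrightarrow>
   i < 2*n \<Longrightarrow> j < 2*n \<Longrightarrow> sigma_comb c1 c2 c3 $$ (i,j) =
     c1 $$ (i div 2, j div 2) * sigma 1 $$ (i mod 2, j mod 2) +
     c2 $$ (i div 2, j div 2) * sigma 2 $$ (i mod 2, j mod 2) +
     c3 $$ (i div 2, j div 2) * sigma 3 $$ (i mod 2, j mod 2)"
  unfolding sigma_comb_def by simp

lemma sigma_comb_zero: "sigma_comb (0\<^sub>m n n) (0\<^sub>m n n) (0\<^sub>m n n) = 0\<^sub>m (2*n) (2*n)"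
  unfolding sigma_comb_def tens_zero by simp

context
  fixes n :: nat and c1 c2 c3 :: "complex mat"
  assumes c: "c1 \<in> carrier_mat n n" "c2 \<in> carrier_mat n n" "c3 \<in> carrier_mat n n"
begin

lemma tens_sigma_carrier:
  "tens c1 (sigma 1) \<in> carrier_mat (2*n) (2*n)" "tens c2 (sigma 2) \<in> carrier_mat (2*n) (2*n)"
  "tens c3 (sigma 3) \<in> carrier_mat (2*n) (2*n)"
  using c by auto

lemma sigma_comb_add:
  "c1' \<in> carrier_mat n n \<Longrightarrow> c2' \<in> carrier_mat n n \<Longrightarrow> c3' \<in> carrier_mat n n \<Longrightarrow>
   sigma_comb c1 c2 c3 + sigma_comb c1' c2' c3' = sigma_comb (c1+c1') (c2+c2') (c3+c3')"
  unfolding sigma_comb_def using c by (intro eq_matI) (auto simp: distrib_right)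

lemma sigma_comb_minus:
  "c1' \<in> carrier_mat n n \<Longrightarrow> c2' \<in> carrier_mat n n \<Longrightarrow> c3' \<in> carrier_mat n n \<Longrightarrow>
   sigma_comb c1 c2 c3 - sigma_comb c1' c2' c3' = sigma_comb (c1-c1') (c2-c2') (c3-c3')"
  unfolding sigma_comb_def using c by (intro eq_matI) (auto simp: left_diff_distrib)

lemma rep_mult_sigma_comb:
  assumes a: "a \<in> carrier_mat n n"
  shows "rep a * sigma_comb c1 c2 c3 = sigma_comb (a*c1) (a*c2) (a*c3)"
proof -
  have "rep a * sigma_comb c1 c2 c3
      = rep a * tens c1 (sigma 1) + rep a * tens c2 (sigma 2) + rep a * tens c3 (sigma 3)"
    unfolding sigma_comb_def using tens_sigma_carrier rep_carrier[OF a]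
    by (simp add: mult_add_distrib_mat[of _ "2*n" "2*n"] assoc_add_mat[of _ "2*n" "2*n"])
  also have "\<dots> = sigma_comb (a*c1) (a*c2) (a*c3)"
    unfolding sigma_comb_def rep_def using c a by (simp add: tens_mult[of _ n n _ n])
  finally show ?thesis .
qed

lemma sigma_comb_mult_rep:
  assumes a: "a \<in> carrier_mat n n"
  shows "sigma_comb c1 c2 c3 * rep a = sigma_comb (c1*a) (c2*a) (c3*a)"
proof -
  have "sigma_comb c1 c2 c3 * rep a
      = tens c1 (sigma 1) * rep a + tens c2 (sigma 2) * rep a + tens c3 (sigma 3) * rep a"
    unfolding sigma_comb_def using tens_sigma_carrier rep_carrier[OF a]
    by (simp add: add_mult_distrib_mat[of _ "2*n" "2*n"] assoc_add_mat[of _ "2*n" "2*n"])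
  also have "\<dots> = sigma_comb (c1*a) (c2*a) (c3*a)"
    unfolding sigma_comb_def rep_def using c a by (simp add: tens_mult[of _ n n _ n])
  finally show ?thesis .
qed

lemma sigma_comb_eq_zero:
  assumes z: "sigma_comb c1 c2 c3 = 0\<^sub>m (2*n) (2*n)"
  shows "c1 = 0\<^sub>m n n \<and> c2 = 0\<^sub>m n n \<and> c3 = 0\<^sub>m n n"
proof -
  have "c1 $$ (i,j) = 0 \<and> c2 $$ (i,j) = 0 \<and> c3 $$ (i,j) = 0" if ij: "i < n" "j < n" for i j
  proof -
    have "sigma_comb c1 c2 c3 $$ (2*i, 2*j) = 0" "sigma_comb c1 c2 c3 $$ (2*i, 2*j+1) = 0"
      "sigma_comb c1 c2 c3 $$ (2*i+1, 2*j) = 0"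
      using z ij by auto
    then have "\<i> * c3 $$ (i,j) = 0" "c1 $$ (i,j) * \<i> + c2 $$ (i,j) = 0" "c1 $$ (i,j) * \<i> - c2 $$ (i,j) = 0"
      using ij by (simp_all add: sigma_comb_index[OF c] sigma_entries del: One_nat_def)
    moreover have "(c1 $$ (i,j) * \<i> + c2 $$ (i,j)) + (c1 $$ (i,j) * \<i> - c2 $$ (i,j))
        = 2 * \<i> * c1 $$ (i,j)"
      by (simp add: algebra_simps)
    ultimately show ?thesis by auto
  qed
  then show ?thesis using c by (auto intro!: eq_matI)
qed

end

lemma ebasis_mult_rep_sum:
  assumes "a1 \<in> carrier_mat (KN_dim N) (KN_dim N)" "a2 \<in> carrier_mat (KN_dim N) (KN_dim N)"
    "a3 \<in> carrier_mat (KN_dim N) (KN_dim N)"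
  shows "ebasis N 1 * rep a1 + ebasis N 2 * rep a2 + ebasis N 3 * rep a3 = sigma_comb a1 a2 a3"
  unfolding ebasis_def rep_def sigma_comb_def using assms
  by (simp add: tens_mult[of _ "KN_dim N" "KN_dim N" _ "KN_dim N"])

lemma Dirac_eq_sigma_comb: "Dirac N = sigma_comb (Xop N 1) (Xop N 2) (Xop N 3)"
  unfolding Dirac_def sigma_comb_def ..

lemma Xop_carrier [simp]: "Xop N k \<in> carrier_mat (KN_dim N) (KN_dim N)"
  unfolding Xop_def by auto

lemma Dirac_carrier [simp]: "Dirac N \<in> carrier_mat (2 * KN_dim N) (2 * KN_dim N)"
  unfolding Dirac_eq_sigma_comb by (rule sigma_comb_carrier) auto

lemma Xop_commutator_carrier [simp]:
  "b \<in> carrier_mat (KN_dim N) (KN_dim N) \<Longrightarrow> Xop N k * b - b * Xop N k \<in> carrier_mat (KN_dim N) (KN_dim N)"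
  by (intro minus_carrier_mat mult_carrier_mat[of _ _ "KN_dim N"]) auto

lemma dd_eq_sigma_comb:
  assumes b: "b \<in> carrier_mat (KN_dim N) (KN_dim N)"
  shows "dd N b = sigma_comb (Xop N 1 * b - b * Xop N 1) (Xop N 2 * b - b * Xop N 2) (Xop N 3 * b - b * Xop N 3)"
proof -
  have "dd N b = sigma_comb (Xop N 1 * b) (Xop N 2 * b) (Xop N 3 * b)
      - sigma_comb (b * Xop N 1) (b * Xop N 2) (b * Xop N 3)"
    unfolding dd_def Dirac_eq_sigma_comb using b
    by (simp add: rep_mult_sigma_comb[of _ "KN_dim N"] sigma_comb_mult_rep[of _ "KN_dim N"])
  also have "\<dots> = sigma_comb (Xop N 1 * b - b * Xop N 1) (Xop N 2 * b - b * Xop N 2) (Xop N 3 * b - b * Xop N 3)"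
    using b by (intro sigma_comb_minus mult_carrier_mat[of _ _ "KN_dim N"]) auto
  finally show ?thesis .
qed

lemma dd_carrier [simp]:
  "b \<in> carrier_mat (KN_dim N) (KN_dim N) \<Longrightarrow> dd N b \<in> carrier_mat (2 * KN_dim N) (2 * KN_dim N)"
  unfolding dd_def by (intro minus_carrier_mat mult_carrier_mat[of _ _ "2 * KN_dim N"]) auto

lemma rep_mult_dd_carrier [simp]:
  "a \<in> carrier_mat (KN_dim N) (KN_dim N) \<Longrightarrow> b \<in> carrier_mat (KN_dim N) (KN_dim N) \<Longrightarrow>
   rep a * dd N b \<in> carrier_mat (2 * KN_dim N) (2 * KN_dim N)"
  by (rule mult_carrier_mat[OF rep_carrier dd_carrier])

subsection \<open>Closure properties of the one-forms\<close>

lemma Omega1_carrier: "w \<in> Omega1 N \<Longrightarrow> w \<in> carrier_mat (2 * KN_dim N) (2 * KN_dim N)"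
  by (induction rule: Omega1.induct) auto

lemma Omega1_add: "w \<in> Omega1 N \<Longrightarrow> v \<in> Omega1 N \<Longrightarrow> w + v \<in> Omega1 N"
proof (induction rule: Omega1.induct)
  case zero
  then show ?case using Omega1_carrier[of v N] by simp
next
  case (step a b w)
  have "rep a * dd N b + w + v = rep a * dd N b + (w + v)"
    using step Omega1_carrier[of v N] Omega1_carrier[of w N]
    by (intro assoc_add_mat[of _ "2 * KN_dim N" "2 * KN_dim N"]) auto
  then show ?case using step Omega1.step by auto
qed

lemma dd_in_Omega1:
  assumes b: "b \<in> carrier_mat (KN_dim N) (KN_dim N)"
  shows "dd N b \<in> Omega1 N"
proof -
  have "rep (1\<^sub>m (KN_dim N)) * dd N b + 0\<^sub>m (2 * KN_dim N) (2 * KN_dim N) \<in> Omega1 N"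
    using b by (intro Omega1.step Omega1.zero) auto
  then show ?thesis
    using dd_carrier[OF b] by (simp add: rep_one)
qed

lemma rep_mult_in_Omega1:
  "w \<in> Omega1 N \<Longrightarrow> a \<in> carrier_mat (KN_dim N) (KN_dim N) \<Longrightarrow> rep a * w \<in> Omega1 N"
proof (induction rule: Omega1.induct)
  case zero
  then show ?case using Omega1.zero[of N] right_mult_zero_mat[OF rep_carrier] by metis
next
  case (step a' b w)
  have "rep a * (rep a' * dd N b + w) = rep a * (rep a' * dd N b) + rep a * w"
    using step Omega1_carrier[of w N] by (intro mult_add_distrib_mat[OF rep_carrier]) auto
  also have "rep a * (rep a' * dd N b) = rep (a * a') * dd N b"
    using step by (simp add: rep_mult[of _ "KN_dim N"] assoc_mult_mat[OF rep_carrier rep_carrier dd_carrier])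
  finally have "rep a * (rep a' * dd N b + w) = rep (a * a') * dd N b + rep a * w" .
  then show ?case using step by (simp add: Omega1.step)
qed

lemma commutator_mult_right:
  fixes D B C :: "'a::comm_ring_1 mat"
  assumes D: "D \<in> carrier_mat n n" and B: "B \<in> carrier_mat n n" and C: "C \<in> carrier_mat n n"
  shows "(D * B - B * D) * C = (D * (B * C) - (B * C) * D) + (- B) * (D * C - C * D)"
proof -
  have c: "D * B \<in> carrier_mat n n" "B * D \<in> carrier_mat n n" "D * C \<in> carrier_mat n n"
    "C * D \<in> carrier_mat n n" "D * B * C \<in> carrier_mat n n" "B * D * C \<in> carrier_mat n n"
    "B * C * D \<in> carrier_mat n n"
    using assms by auto
  have distrib: "(D * B - B * D) * C = D * B * C - B * D * C"
    by (rule minus_mult_distrib_mat[OF c(1,2) C])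
  have assoc: "D * (B * C) = D * B * C"
    using D B C by (rule assoc_mult_mat[symmetric])
  have minus_B: "(- B) * (D * C - C * D) = - (B * D * C) - - (B * C * D)"
    using assms uminus_mult_left_mat[of B "D * C"] uminus_mult_left_mat[of B "C * D"]
    by (simp add: mult_minus_distrib_mat[OF uminus_carrier_mat[OF B] c(3,4)] assoc_mult_mat[of B n n])
  have regroup: "P - Q = (P - R) + (- Q - - R)"
    if "P \<in> carrier_mat n n" "Q \<in> carrier_mat n n" "R \<in> carrier_mat n n" for P Q R :: "'a mat"
    using that by (intro eq_matI) auto
  show ?thesis
    unfolding distrib assoc minus_B by (rule regroup[OF c(5,6,7)])
qed

lemma dd_mult_rep_in_Omega1:
  assumes b: "b \<in> carrier_mat (KN_dim N) (KN_dim N)" and c: "c \<in> carrier_mat (KN_dim N) (KN_dim N)"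
  shows "dd N b * rep c \<in> Omega1 N"
proof -
  have "dd N b * rep c = dd N (b * c) + rep (- b) * dd N c"
    unfolding dd_def rep_uminus rep_mult[OF b c]
    by (rule commutator_mult_right[OF Dirac_carrier rep_carrier[OF b] rep_carrier[OF c]])
  then show ?thesis
    using b c by (simp add: Omega1_add dd_in_Omega1 rep_mult_in_Omega1)
qed

lemma mult_rep_in_Omega1:
  "w \<in> Omega1 N \<Longrightarrow> c \<in> carrier_mat (KN_dim N) (KN_dim N) \<Longrightarrow> w * rep c \<in> Omega1 N"
proof (induction rule: Omega1.induct)
  case zero
  then show ?case using Omega1.zero[of N] left_mult_zero_mat[OF rep_carrier] by metis
next
  case (step a b w)
  have "(rep a * dd N b + w) * rep c = rep a * dd N b * rep c + w * rep c"
    using step Omega1_carrier[of w N] by (intro add_mult_distrib_mat[OF rep_mult_dd_carrier _ rep_carrier]) auto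
  also have "rep a * dd N b * rep c = rep a * (dd N b * rep c)"
    using step by (intro assoc_mult_mat[OF rep_carrier dd_carrier rep_carrier])
  finally have "(rep a * dd N b + w) * rep c = rep a * (dd N b * rep c) + w * rep c" .
  then show ?case
    using step by (simp add: Omega1_add rep_mult_in_Omega1 dd_mult_rep_in_Omega1)
qed

lemma Omega1_sigma_comb:
  assumes "w \<in> Omega1 N"
  obtains a1 a2 a3 where "a1 \<in> carrier_mat (KN_dim N) (KN_dim N)" "a2 \<in> carrier_mat (KN_dim N) (KN_dim N)"
    "a3 \<in> carrier_mat (KN_dim N) (KN_dim N)" "w = sigma_comb a1 a2 a3"
  using assms
proof (induction arbitrary: thesis rule: Omega1.induct)
  case zero
  then show ?case using sigma_comb_zero[of "KN_dim N"] zero_carrier_mat by metis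
next
  case (step a b w)
  then obtain a1 a2 a3 where w: "a1 \<in> carrier_mat (KN_dim N) (KN_dim N)"
    "a2 \<in> carrier_mat (KN_dim N) (KN_dim N)" "a3 \<in> carrier_mat (KN_dim N) (KN_dim N)"
    "w = sigma_comb a1 a2 a3" by blast
  define c where "c k = a * (Xop N k * b - b * Xop N k)" for k
  have c_carrier: "c k \<in> carrier_mat (KN_dim N) (KN_dim N)" for k
    unfolding c_def using step.hyps by (auto intro: mult_carrier_mat)
  have "rep a * dd N b = sigma_comb (c 1) (c 2) (c 3)"
    unfolding c_def dd_eq_sigma_comb[OF step.hyps(2)] using step.hyps
    by (intro rep_mult_sigma_comb) auto
  then have "rep a * dd N b + w = sigma_comb (c 1 + a1) (c 2 + a2) (c 3 + a3)"
    using w c_carrier by (simp add: sigma_comb_add[of _ "KN_dim N"])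
  then show ?case
    using w c_carrier by (intro step.prems[of "c 1 + a1" "c 2 + a2" "c 3 + a3"]) auto
qed

subsection \<open>Matrix units and sub-bimodules of \<open>A\<^sup>3\<close>\<close>

definition mat_unit :: "nat \<Rightarrow> nat \<Rightarrow> nat \<Rightarrow> 'a::comm_ring_1 mat" where
  "mat_unit n r s = mat n n (\<lambda>(i,j). if i = r \<and> j = s then 1 else 0)"

lemma mat_unit_carrier [simp]: "mat_unit n r s \<in> carrier_mat n n"
  unfolding mat_unit_def by auto

lemma mat_unit_mult:
  assumes c: "c \<in> carrier_mat n n" and s: "s < n"
  shows "mat_unit n r s * c = mat n n (\<lambda>(i,l). if i = r then c $$ (s,l) else 0)"
proof (rule eq_matI)
  fix i j assume ij: "i < dim_row (mat n n (\<lambda>(i,l). if i = r then c $$ (s,l) else 0))"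
     "j < dim_col (mat n n (\<lambda>(i,l). if i = r then c $$ (s,l) else 0))"
  have "(mat_unit n r s * c) $$ (i,j) = (\<Sum>m<n. (if i = r \<and> m = s then 1 else 0) * c $$ (m,j))"
    using ij c unfolding mat_unit_def by (simp add: scalar_prod_def atLeast0LessThan)
  also have "\<dots> = (if i = r then c $$ (s,j) else 0)"
    using s by (simp add: if_distrib[where f = "\<lambda>x. x * _"] sum.delta' cong: if_cong)
  finally show "(mat_unit n r s * c) $$ (i,j) = mat n n (\<lambda>(i,l). if i = r then c $$ (s,l) else 0) $$ (i,j)"
    using ij by simp
qed (use c in \<open>auto simp: mat_unit_def\<close>)

lemma mult_mat_unit:
  assumes c: "c \<in> carrier_mat n n" and r: "r < n"
  shows "c * mat_unit n r s = mat n n (\<lambda>(i,l). if l = s then c $$ (i,r) else 0)"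
proof (rule eq_matI)
  fix i j assume ij: "i < dim_row (mat n n (\<lambda>(i,l). if l = s then c $$ (i,r) else 0))"
     "j < dim_col (mat n n (\<lambda>(i,l). if l = s then c $$ (i,r) else 0))"
  have "(c * mat_unit n r s) $$ (i,j) = (\<Sum>m<n. c $$ (i,m) * (if m = r \<and> j = s then 1 else 0))"
    using ij c unfolding mat_unit_def by (simp add: scalar_prod_def atLeast0LessThan)
  also have "\<dots> = (if j = s then c $$ (i,r) else 0)"
    using r by (simp add: if_distrib[where f = "\<lambda>x. _ * x"] sum.delta' cong: if_cong)
  finally show "(c * mat_unit n r s) $$ (i,j) = mat n n (\<lambda>(i,l). if l = s then c $$ (i,r) else 0) $$ (i,j)"
    using ij by simp
qed (use c in \<open>auto simp: mat_unit_def\<close>)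

lemma mat_unit_sandwich:
  assumes c: "c \<in> carrier_mat n n" and m: "m < n" and p: "p < n" and q: "q < n"
  shows "mat_unit n m p * c * mat_unit n q m = c $$ (p,q) \<cdot>\<^sub>m mat_unit n m m"
proof -
  have "mat_unit n m p * c \<in> carrier_mat n n"
    using c by (intro mult_carrier_mat[OF mat_unit_carrier])
  then show ?thesis
    unfolding mat_unit_mult[OF c p] by (subst mult_mat_unit) (use m q c in \<open>auto simp: mat_unit_def intro!: eq_matI\<close>)
qed

lemma commutator_mat_unit_index:
  assumes X: "X \<in> carrier_mat n n" and "r < n" "s < n" "p < n" "q < n"
  shows "(X * mat_unit n r s - mat_unit n r s * X) $$ (p,q)
    = (if q = s then X $$ (p,r) else 0) - (if p = r then X $$ (s,q) else 0)"
  using assms by (simp add: mult_mat_unit[OF X] mat_unit_mult[OF X])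

lemma bimodule_contains_entry_scalars:
  fixes P :: "'a::comm_ring_1 mat \<Rightarrow> 'a mat \<Rightarrow> 'a mat \<Rightarrow> bool"
  assumes zero: "P (0\<^sub>m n n) (0\<^sub>m n n) (0\<^sub>m n n)"
    and add: "\<And>c1 c2 c3 c1' c2' c3'. P c1 c2 c3 \<Longrightarrow> P c1' c2' c3' \<Longrightarrow> P (c1 + c1') (c2 + c2') (c3 + c3')"
    and lmult: "\<And>c1 c2 c3 a. P c1 c2 c3 \<Longrightarrow> a \<in> carrier_mat n n \<Longrightarrow> P (a * c1) (a * c2) (a * c3)"
    and rmult: "\<And>c1 c2 c3 a. P c1 c2 c3 \<Longrightarrow> a \<in> carrier_mat n n \<Longrightarrow> P (c1 * a) (c2 * a) (c3 * a)"
    and c: "c1 \<in> carrier_mat n n" "c2 \<in> carrier_mat n n" "c3 \<in> carrier_mat n n" "P c1 c2 c3"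
    and pq: "p < n" "q < n"
  shows "P (c1 $$ (p,q) \<cdot>\<^sub>m 1\<^sub>m n) (c2 $$ (p,q) \<cdot>\<^sub>m 1\<^sub>m n) (c3 $$ (p,q) \<cdot>\<^sub>m 1\<^sub>m n)"
proof -
  define I :: "nat \<Rightarrow> 'a mat" where "I k = mat n n (\<lambda>(i,j). if i = j \<and> i < k then 1 else 0)" for k
  have partial: "P (c1 $$ (p,q) \<cdot>\<^sub>m I k) (c2 $$ (p,q) \<cdot>\<^sub>m I k) (c3 $$ (p,q) \<cdot>\<^sub>m I k)" if "k \<le> n" for k
    using that
  proof (induction k)
    case 0
    have "x \<cdot>\<^sub>m I 0 = 0\<^sub>m n n" for x :: 'a
      unfolding I_def by (intro eq_matI) auto
    then show ?case using zero by simp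
  next
    case (Suc k)
    then have k: "k < n" by simp
    have "P (mat_unit n k p * c1 * mat_unit n q k) (mat_unit n k p * c2 * mat_unit n q k)
        (mat_unit n k p * c3 * mat_unit n q k)"
      by (intro rmult[OF lmult[OF c(4)]]) auto
    then have unit: "P (c1 $$ (p,q) \<cdot>\<^sub>m mat_unit n k k) (c2 $$ (p,q) \<cdot>\<^sub>m mat_unit n k k)
        (c3 $$ (p,q) \<cdot>\<^sub>m mat_unit n k k)"
      using c pq k by (simp add: mat_unit_sandwich)
    have split: "x \<cdot>\<^sub>m I k + x \<cdot>\<^sub>m mat_unit n k k = x \<cdot>\<^sub>m I (Suc k)" for x :: 'a
      unfolding I_def mat_unit_def by (intro eq_matI) auto
    show ?case
      using add[OF Suc.IH[OF less_imp_le[OF k]] unit] unfolding split .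
  qed
  have "I n = 1\<^sub>m n"
    unfolding I_def by (intro eq_matI) auto
  then show ?thesis
    using partial[of n] by simp
qed

definition one_form_coeffs :: "nat \<Rightarrow> complex mat \<Rightarrow> complex mat \<Rightarrow> complex mat \<Rightarrow> bool" where
  "one_form_coeffs N c1 c2 c3 \<longleftrightarrow> c1 \<in> carrier_mat (KN_dim N) (KN_dim N) \<and> c2 \<in> carrier_mat (KN_dim N) (KN_dim N)
     \<and> c3 \<in> carrier_mat (KN_dim N) (KN_dim N) \<and> sigma_comb c1 c2 c3 \<in> Omega1 N"

lemma one_form_coeffs_zero:
  "one_form_coeffs N (0\<^sub>m (KN_dim N) (KN_dim N)) (0\<^sub>m (KN_dim N) (KN_dim N)) (0\<^sub>m (KN_dim N) (KN_dim N))"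
  unfolding one_form_coeffs_def sigma_comb_zero using Omega1.zero by auto

lemma one_form_coeffs_add:
  "one_form_coeffs N c1 c2 c3 \<Longrightarrow> one_form_coeffs N c1' c2' c3' \<Longrightarrow>
   one_form_coeffs N (c1 + c1') (c2 + c2') (c3 + c3')"
  unfolding one_form_coeffs_def by (auto simp: sigma_comb_add[of _ "KN_dim N", symmetric] Omega1_add)

lemma one_form_coeffs_lmult:
  "one_form_coeffs N c1 c2 c3 \<Longrightarrow> a \<in> carrier_mat (KN_dim N) (KN_dim N) \<Longrightarrow>
   one_form_coeffs N (a * c1) (a * c2) (a * c3)"
  unfolding one_form_coeffs_def
  by (auto simp: rep_mult_sigma_comb[of _ "KN_dim N", symmetric] rep_mult_in_Omega1)

lemma one_form_coeffs_rmult: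
  "one_form_coeffs N c1 c2 c3 \<Longrightarrow> a \<in> carrier_mat (KN_dim N) (KN_dim N) \<Longrightarrow>
   one_form_coeffs N (c1 * a) (c2 * a) (c3 * a)"
  unfolding one_form_coeffs_def
  by (auto simp: sigma_comb_mult_rep[of _ "KN_dim N", symmetric] mult_rep_in_Omega1)

lemma one_form_coeffs_commutators:
  assumes b: "b \<in> carrier_mat (KN_dim N) (KN_dim N)"
  shows "one_form_coeffs N (Xop N 1 * b - b * Xop N 1) (Xop N 2 * b - b * Xop N 2) (Xop N 3 * b - b * Xop N 3)"
  using dd_in_Omega1[OF b] b unfolding one_form_coeffs_def dd_eq_sigma_comb[OF b] by simp

lemma one_form_coeffs_entry_scalars:
  assumes "one_form_coeffs N c1 c2 c3" "p < KN_dim N" "q < KN_dim N"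
  shows "one_form_coeffs N (c1 $$ (p,q) \<cdot>\<^sub>m 1\<^sub>m (KN_dim N)) (c2 $$ (p,q) \<cdot>\<^sub>m 1\<^sub>m (KN_dim N))
    (c3 $$ (p,q) \<cdot>\<^sub>m 1\<^sub>m (KN_dim N))"
  using assms
  by (intro bimodule_contains_entry_scalars[where P = "one_form_coeffs N"] one_form_coeffs_zero
      one_form_coeffs_add one_form_coeffs_lmult one_form_coeffs_rmult) (auto simp: one_form_coeffs_def)

subsection \<open>The spin-\<open>1/2\<close> block\<close>

lemma KN_dim_ge_3: "N \<ge> 1 \<Longrightarrow> KN_dim N \<ge> 3"
proof -
  assume "N \<ge> 1"
  then have "Suc N * (Suc N + 1) \<ge> 2 * 3" by (intro mult_mono) auto
  then show ?thesis unfolding KN_dim_def blk_start_def by linarith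
qed

lemma blk_spin_half:
  assumes "i = 1 \<or> i = 2"
  shows "blk i = 1"
  unfolding blk_def
proof (rule Least_equality)
  show "i < blk_start (Suc 1)"
    using assms by (auto simp: blk_start_def)
  fix y assume "i < blk_start (Suc y)"
  then show "1 \<le> y"
    using assms by (cases y) (auto simp: blk_start_def)
qed

text \<open>Indices 1 and 2 of \<open>K\<^sub>N\<close> carry the states \<open>m = 1/2\<close> and \<open>m = -1/2\<close> of \<open>\<rho>\<^sub>1\<^sub>/\<^sub>2\<close>.\<close>

lemma Xop_spin_half_entries:
  assumes "N \<ge> 1"
  shows "Xop N 1 $$ (2,1) = - \<i>/2" "Xop N 2 $$ (2,1) = 1/2" "Xop N 3 $$ (2,1) = 0"
    "Xop N 1 $$ (1,2) = - \<i>/2" "Xop N 2 $$ (1,2) = - 1/2" "Xop N 3 $$ (1,2) = 0"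
    "Xop N 1 $$ (1,1) = 0" "Xop N 2 $$ (1,1) = 0" "Xop N 3 $$ (1,1) = - \<i>/2"
    "Xop N 1 $$ (2,2) = 0" "Xop N 2 $$ (2,2) = 0" "Xop N 3 $$ (2,2) = \<i>/2"
  using KN_dim_ge_3[OF assms] blk_spin_half
  by (simp_all add: Xop_def rho_def spin_L_def spin_plus_def blk_start_def field_simps)

lemma one_form_coeffs_units:
  assumes N: "N \<ge> 1"
  shows "one_form_coeffs N (1\<^sub>m (KN_dim N)) (0\<^sub>m (KN_dim N) (KN_dim N)) (0\<^sub>m (KN_dim N) (KN_dim N))"
    "one_form_coeffs N (0\<^sub>m (KN_dim N) (KN_dim N)) (1\<^sub>m (KN_dim N)) (0\<^sub>m (KN_dim N) (KN_dim N))"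
    "one_form_coeffs N (0\<^sub>m (KN_dim N) (KN_dim N)) (0\<^sub>m (KN_dim N) (KN_dim N)) (1\<^sub>m (KN_dim N))"
proof -
  define S where "S x y z \<longleftrightarrow> one_form_coeffs N (x \<cdot>\<^sub>m 1\<^sub>m (KN_dim N)) (y \<cdot>\<^sub>m 1\<^sub>m (KN_dim N)) (z \<cdot>\<^sub>m 1\<^sub>m (KN_dim N))"
    for x y z
  have S_add: "S (x + x') (y + y') (z + z')" if "S x y z" "S x' y' z'" for x y z x' y' z'
    using one_form_coeffs_add[OF that[unfolded S_def]] unfolding S_def
    by (simp add: add_smult_distrib_right_mat[of "1\<^sub>m (KN_dim N)" "KN_dim N" "KN_dim N", symmetric])
  have S_smult: "S (a * x) (a * y) (a * z)" if "S x y z" for a x y z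
  proof -
    have "(a \<cdot>\<^sub>m 1\<^sub>m (KN_dim N)) * (x \<cdot>\<^sub>m 1\<^sub>m (KN_dim N)) = (a * x) \<cdot>\<^sub>m 1\<^sub>m (KN_dim N)" for x
      by (intro eq_matI) auto
    then show ?thesis
      using one_form_coeffs_lmult[OF that[unfolded S_def], of "a \<cdot>\<^sub>m 1\<^sub>m (KN_dim N)"] unfolding S_def by simp
  qed
  have S_commutator: "S ((Xop N 1 * b - b * Xop N 1) $$ (p,q)) ((Xop N 2 * b - b * Xop N 2) $$ (p,q))
      ((Xop N 3 * b - b * Xop N 3) $$ (p,q))"
    if "b \<in> carrier_mat (KN_dim N) (KN_dim N)" "p < KN_dim N" "q < KN_dim N" for b p q
    unfolding S_def by (rule one_form_coeffs_entry_scalars[OF one_form_coeffs_commutators[OF that(1)] that(2,3)])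
  have dim: "1 < KN_dim N" "2 < KN_dim N"
    using KN_dim_ge_3[OF N] by auto
  have v1: "S (- \<i>/2) (1/2) 0"
    using S_commutator[OF mat_unit_carrier[of "KN_dim N" 1 1] dim(2) dim(1)] dim
    by (simp add: commutator_mat_unit_index Xop_spin_half_entries[OF N] del: One_nat_def)
  have v2: "S (\<i>/2) (1/2) 0"
    using S_commutator[OF mat_unit_carrier[of "KN_dim N" 1 1] dim(1) dim(2)] dim
    by (simp add: commutator_mat_unit_index Xop_spin_half_entries[OF N] del: One_nat_def)
  have v3: "S 0 0 (- \<i>)"
    using S_commutator[OF mat_unit_carrier[of "KN_dim N" 1 2] dim(1) dim(2)] dim
    by (simp add: commutator_mat_unit_index Xop_spin_half_entries[OF N] del: One_nat_def)
  have "S 1 0 0" "S 0 1 0" "S 0 0 1"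
    using S_add[OF S_smult[OF v1, of \<i>] S_smult[OF v2, of "- \<i>"]] S_add[OF v1 v2] S_smult[OF v3, of \<i>]
    by simp_all
  moreover have "(1::complex) \<cdot>\<^sub>m 1\<^sub>m (KN_dim N) = 1\<^sub>m (KN_dim N)"
    "(0::complex) \<cdot>\<^sub>m 1\<^sub>m (KN_dim N) = 0\<^sub>m (KN_dim N) (KN_dim N)"
    by (auto intro!: eq_matI)
  ultimately show "one_form_coeffs N (1\<^sub>m (KN_dim N)) (0\<^sub>m (KN_dim N) (KN_dim N)) (0\<^sub>m (KN_dim N) (KN_dim N))"
    "one_form_coeffs N (0\<^sub>m (KN_dim N) (KN_dim N)) (1\<^sub>m (KN_dim N)) (0\<^sub>m (KN_dim N) (KN_dim N))"
    "one_form_coeffs N (0\<^sub>m (KN_dim N) (KN_dim N)) (0\<^sub>m (KN_dim N) (KN_dim N)) (1\<^sub>m (KN_dim N))"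
    unfolding S_def by simp_all
qed

lemma one_form_coeffs_all:
  assumes N: "N \<ge> 1" and a: "a1 \<in> carrier_mat (KN_dim N) (KN_dim N)"
    "a2 \<in> carrier_mat (KN_dim N) (KN_dim N)" "a3 \<in> carrier_mat (KN_dim N) (KN_dim N)"
  shows "one_form_coeffs N a1 a2 a3"
proof -
  have "one_form_coeffs N a1 (0\<^sub>m (KN_dim N) (KN_dim N)) (0\<^sub>m (KN_dim N) (KN_dim N))"
    using one_form_coeffs_lmult[OF one_form_coeffs_units(1)[OF N] a(1)] a(1) by simp
  moreover have "one_form_coeffs N (0\<^sub>m (KN_dim N) (KN_dim N)) a2 (0\<^sub>m (KN_dim N) (KN_dim N))"
    using one_form_coeffs_lmult[OF one_form_coeffs_units(2)[OF N] a(2)] a(2) by simp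
  moreover have "one_form_coeffs N (0\<^sub>m (KN_dim N) (KN_dim N)) (0\<^sub>m (KN_dim N) (KN_dim N)) a3"
    using one_form_coeffs_lmult[OF one_form_coeffs_units(3)[OF N] a(3)] a(3) by simp
  ultimately have "one_form_coeffs N (a1 + 0\<^sub>m (KN_dim N) (KN_dim N) + 0\<^sub>m (KN_dim N) (KN_dim N))
      (0\<^sub>m (KN_dim N) (KN_dim N) + a2 + 0\<^sub>m (KN_dim N) (KN_dim N))
      (0\<^sub>m (KN_dim N) (KN_dim N) + 0\<^sub>m (KN_dim N) (KN_dim N) + a3)"
    by (intro one_form_coeffs_add)
  then show ?thesis
    using a by simp
qed

lemma Omega1_eq_ebasis_span:
  assumes N: "N \<ge> 1"
  shows "Omega1 N = {ebasis N 1 * rep a1 + ebasis N 2 * rep a2 + ebasis N 3 * rep a3 | a1 a2 a3.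
    a1 \<in> carrier_mat (KN_dim N) (KN_dim N) \<and> a2 \<in> carrier_mat (KN_dim N) (KN_dim N)
    \<and> a3 \<in> carrier_mat (KN_dim N) (KN_dim N)}"
proof (intro equalityI subsetI)
  fix w assume "w \<in> Omega1 N"
  then obtain a1 a2 a3 where a: "a1 \<in> carrier_mat (KN_dim N) (KN_dim N)"
    "a2 \<in> carrier_mat (KN_dim N) (KN_dim N)" "a3 \<in> carrier_mat (KN_dim N) (KN_dim N)"
    and "w = sigma_comb a1 a2 a3"
    by (rule Omega1_sigma_comb)
  then have "w = ebasis N 1 * rep a1 + ebasis N 2 * rep a2 + ebasis N 3 * rep a3"
    unfolding ebasis_mult_rep_sum[OF a] by simp
  then show "w \<in> {ebasis N 1 * rep a1 + ebasis N 2 * rep a2 + ebasis N 3 * rep a3 | a1 a2 a3.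
    a1 \<in> carrier_mat (KN_dim N) (KN_dim N) \<and> a2 \<in> carrier_mat (KN_dim N) (KN_dim N)
    \<and> a3 \<in> carrier_mat (KN_dim N) (KN_dim N)}"
    using a by blast
next
  fix w assume "w \<in> {ebasis N 1 * rep a1 + ebasis N 2 * rep a2 + ebasis N 3 * rep a3 | a1 a2 a3.
    a1 \<in> carrier_mat (KN_dim N) (KN_dim N) \<and> a2 \<in> carrier_mat (KN_dim N) (KN_dim N)
    \<and> a3 \<in> carrier_mat (KN_dim N) (KN_dim N)}"
  then obtain a1 a2 a3 where a: "a1 \<in> carrier_mat (KN_dim N) (KN_dim N)"
    "a2 \<in> carrier_mat (KN_dim N) (KN_dim N)" "a3 \<in> carrier_mat (KN_dim N) (KN_dim N)"
    and "w = ebasis N 1 * rep a1 + ebasis N 2 * rep a2 + ebasis N 3 * rep a3"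
    by blast
  then show "w \<in> Omega1 N"
    using one_form_coeffs_all[OF N a] unfolding one_form_coeffs_def ebasis_mult_rep_sum[OF a] by simp
qed

lemma ebasis_eq_sigma_comb:
  "ebasis N 1 = sigma_comb (1\<^sub>m (KN_dim N)) (0\<^sub>m (KN_dim N) (KN_dim N)) (0\<^sub>m (KN_dim N) (KN_dim N))"
  "ebasis N 2 = sigma_comb (0\<^sub>m (KN_dim N) (KN_dim N)) (1\<^sub>m (KN_dim N)) (0\<^sub>m (KN_dim N) (KN_dim N))"
  "ebasis N 3 = sigma_comb (0\<^sub>m (KN_dim N) (KN_dim N)) (0\<^sub>m (KN_dim N) (KN_dim N)) (1\<^sub>m (KN_dim N))"
  by (intro eq_matI; simp add: ebasis_def sigma_comb_def)+

lemma ebasis_in_Omega1: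
  assumes "N \<ge> 1" "k \<in> {1,2,3}"
  shows "ebasis N k \<in> Omega1 N"
  using assms one_form_coeffs_units[OF assms(1)]
  by (auto simp: one_form_coeffs_def ebasis_eq_sigma_comb simp del: One_nat_def)

lemma ebasis_independent:
  assumes a: "a1 \<in> carrier_mat (KN_dim N) (KN_dim N)" "a2 \<in> carrier_mat (KN_dim N) (KN_dim N)"
    "a3 \<in> carrier_mat (KN_dim N) (KN_dim N)"
    and "ebasis N 1 * rep a1 + ebasis N 2 * rep a2 + ebasis N 3 * rep a3 = 0\<^sub>m (2 * KN_dim N) (2 * KN_dim N)"
  shows "a1 = 0\<^sub>m (KN_dim N) (KN_dim N) \<and> a2 = 0\<^sub>m (KN_dim N) (KN_dim N) \<and> a3 = 0\<^sub>m (KN_dim N) (KN_dim N)"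
proof (rule sigma_comb_eq_zero[OF a])
  show "sigma_comb a1 a2 a3 = 0\<^sub>m (2 * KN_dim N) (2 * KN_dim N)"
    using assms(4) unfolding ebasis_mult_rep_sum[OF a] .
qed

theorem proposition8p1:
  fixes N :: nat
  assumes "N \<ge> 1"
  shows "(\<forall>k\<in>{1,2,3}. ebasis N k \<in> Omega1 N \<and>
            (\<forall>a\<in>carrier_mat (KN_dim N) (KN_dim N). rep a * ebasis N k = ebasis N k * rep a))
       \<and> Omega1 N = {ebasis N 1 * rep a1 + ebasis N 2 * rep a2 + ebasis N 3 * rep a3 | a1 a2 a3.
                      a1 \<in> carrier_mat (KN_dim N) (KN_dim N) \<and> a2 \<in> carrier_mat (KN_dim N) (KN_dim N)
                      \<and> a3 \<in> carrier_mat (KN_dim N) (KN_dim N)}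
       \<and> (\<forall>a1\<in>carrier_mat (KN_dim N) (KN_dim N). \<forall>a2\<in>carrier_mat (KN_dim N) (KN_dim N).
          \<forall>a3\<in>carrier_mat (KN_dim N) (KN_dim N).
            ebasis N 1 * rep a1 + ebasis N 2 * rep a2 + ebasis N 3 * rep a3 = 0\<^sub>m (2 * KN_dim N) (2 * KN_dim N)
            \<longrightarrow> a1 = 0\<^sub>m (KN_dim N) (KN_dim N) \<and> a2 = 0\<^sub>m (KN_dim N) (KN_dim N) \<and> a3 = 0\<^sub>m (KN_dim N) (KN_dim N))"
proof (intro conjI)
  show "\<forall>k\<in>{1,2,3}. ebasis N k \<in> Omega1 N \<and>
    (\<forall>a\<in>carrier_mat (KN_dim N) (KN_dim N). rep a * ebasis N k = ebasis N k * rep a)"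
    using ebasis_in_Omega1[OF assms] rep_commute_ebasis by blast
qed (use Omega1_eq_ebasis_span[OF assms] ebasis_independent in blast)+

end
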